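(* Let $p$ be a prime with $p\equiv 1\pmod 4$, let $a$ be a generator of $\mathbb{F}_p^*$, let $k=\frac{p-1}{4}$, $\theta=\exp\!\left(\frac{2\pi i}{p-1}\right)$ and $\eta=\exp\!\left(\frac{2\pi i}{p}\right)$. For $0\le x<p$ define $\varphi_x\in\mathbb{C}(\mathbb{F}_p)$ by $$\varphi_x(n)=\begin{cases}\dfrac{1}{\sqrt{p}}\,\eta^{2^{-1}a^k n^2}, & x=0,\\[2mm] \dfrac{1}{\sqrt{p(p-1)}}\displaystyle\sum_{j=1}^{p-1}\theta^{x\log_a j}\,\eta^{a^k(j-n)^2-2^{-1}a^k n^2}, & 0<x<p,\end{cases}\qquad n\in\mathbb{F}_p.$$ Then for every $0\le x<p$, $\varphi_x$ is an eigenvector of the discrete Fourier transform $F$ with eigenvalue $(-i)^x$, where $i=\sqrt{-1}$; that is, $F\varphi_x=(-i)^x\varphi_x$.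
   Context: $\mathbb{C}(\mathbb{F}_p)$ is the space of functions $\mathbb{F}_p\to\mathbb{C}$. The discrete Fourier transform is $F[\varphi](m)=\frac{1}{\sqrt{p}}\sum_{n\in\mathbb{F}_p}\eta^{mn}\varphi(n)$. Exponents of $\eta$ are computed in $\mathbb{F}_p$ (with $2^{-1}$ the inverse of $2$ in $\mathbb{F}_p$ and $a^k\in\mathbb{F}_p$); for $j\in\mathbb{F}_p^*$, $\log_a j$ is the unique $m\in\{0,\dots,p-2\}$ with $a^m=j$. *)

theory Defs
  imports "HOL-Analysis.Analysis" "HOL-Number_Theory.Number_Theory"
begin

text \<open>F_p is modelled by the residues 0..p-1 (nat); functions F_p -> C are functions
  nat => complex, of which only the values on {0..<p} matter.\<close>

definition eta_pow :: "nat \<Rightarrow> int \<Rightarrow> complex" where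
  "eta_pow p e = exp (2 * pi * \<i> * of_int (e mod int p) / of_nat p)"

definition theta :: "nat \<Rightarrow> complex" where
  "theta p = exp (2 * pi * \<i> / of_nat (p - 1))"

definition inv2 :: "nat \<Rightarrow> int" where
  "inv2 p = (THE t. 0 \<le> t \<and> t < int p \<and> [2 * t = 1] (mod int p))"

definition dlog :: "nat \<Rightarrow> nat \<Rightarrow> nat \<Rightarrow> nat" where
  "dlog p a j = (THE m. m \<le> p - 2 \<and> [a ^ m = j] (mod p))"

definition DFT :: "nat \<Rightarrow> (nat \<Rightarrow> complex) \<Rightarrow> nat \<Rightarrow> complex" where
  "DFT p \<phi> m = (1 / sqrt (real p)) * (\<Sum>n<p. eta_pow p (int m * int n) * \<phi> n)"

definition phi :: "nat \<Rightarrow> nat \<Rightarrow> nat \<Rightarrow> nat \<Rightarrow> complex" where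
  "phi p a x n =
    (let k = (p - 1) div 4; ak = int a ^ k in
     if x = 0 then (1 / sqrt (real p)) * eta_pow p (inv2 p * ak * int n ^ 2)
     else (1 / sqrt (real p * real (p - 1))) *
       (\<Sum>j\<in>{1..p-1}. theta p ^ (x * dlog p a j) *
          eta_pow p (ak * (int j - int n) ^ 2 - inv2 p * ak * int n ^ 2)))"

end

theory Submission
  imports Defs
begin

text \<open>
  With \<open>c = a ^ k\<close>, a square root of \<open>-1\<close> in \<open>F_p\<close>, every \<open>\<phi>\<^sub>x\<close> is a combination of the
  chirps \<open>n \<mapsto> \<eta> ^ (c (j - n)\<^sup>2 - c n\<^sup>2 / 2)\<close>. Completing the square shows that the Fourier
  transform maps the chirp with parameter \<open>-c j\<close> to the chirp with parameter \<open>j\<close>, up to the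
  factor \<open>G(c/2) / \<surd>p\<close>, where \<open>G(b) = \<Sum>n. \<eta> ^ (b n\<^sup>2)\<close> is the quadratic Gauss sum. As
  \<open>-c = a ^ (3k)\<close>, substituting \<open>j \<mapsto> -c j\<close> multiplies the coefficient \<open>\<theta> ^ (x log\<^sub>a j)\<close> by
  \<open>\<theta> ^ (3kx) = (-\<i>) ^ x\<close>, which is the eigenvalue.

  It remains to show \<open>G(c/2) = \<surd>p\<close>. Multiplying the argument by the non-square \<open>a\<close> changes the
  sign of \<open>G\<close>, so \<open>G(c/2) = (-1) ^ k G(1/2)\<close>, and \<open>G(1/2) = (-1) ^ k \<surd>p\<close> is Gauss's
  determination of the sign: his identity for the alternating sum of Gaussian binomial
  coefficients turns \<open>G(1/2)\<close> into a product of factors \<open>1 - \<eta> ^ -(2j+1)\<close>, whose argument is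
  explicit, while \<open>|G(1/2)|\<^sup>2 = p\<close>.
\<close>

section \<open>Gaussian binomial coefficients\<close>

definition gauss_binomial :: "'a::field \<Rightarrow> nat \<Rightarrow> nat \<Rightarrow> 'a" where
  "gauss_binomial w m i = (\<Prod>j<i. 1 - w ^ (m - j)) / (\<Prod>j<i. 1 - w ^ Suc j)"

definition alt_gauss_binomial_sum :: "'a::field \<Rightarrow> nat \<Rightarrow> 'a" where
  "alt_gauss_binomial_sum w m = (\<Sum>i\<le>m. (-1) ^ i * gauss_binomial w m i)"

lemma gauss_binomial_0 [simp]: "gauss_binomial w m 0 = 1"
  by (simp add: gauss_binomial_def)

text \<open>For \<open>i > m\<close> the numerator contains the factor \<open>1 - w ^ (m - m) = 0\<close>.\<close>
lemma gauss_binomial_eq_0: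
  assumes "m < i" shows "gauss_binomial w m i = 0"
proof -
  have "(\<Prod>j<i. 1 - w ^ (m - j)) = 0"
    using assms by (intro prod_zero) (auto intro!: bexI[of _ m])
  then show ?thesis by (simp add: gauss_binomial_def)
qed

lemma gauss_binomial_Suc_right:
  "gauss_binomial w m (Suc i) = gauss_binomial w m i * (1 - w ^ (m - i)) / (1 - w ^ Suc i)"
  by (simp add: gauss_binomial_def prod.lessThan_Suc)

lemma gauss_binomial_Suc_Suc:
  "gauss_binomial w (Suc m) (Suc i) = gauss_binomial w m i * (1 - w ^ Suc m) / (1 - w ^ Suc i)"
proof -
  have "(\<Prod>j<Suc i. 1 - w ^ (Suc m - j)) = (1 - w ^ Suc m) * (\<Prod>j<i. 1 - w ^ (m - j))"
    by (simp only: prod.lessThan_Suc_shift) simp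
  then show ?thesis
    by (simp add: gauss_binomial_def prod.lessThan_Suc mult_ac)
qed

lemma gauss_binomial_pascal:
  assumes "w ^ Suc i \<noteq> 1"
  shows "gauss_binomial w (Suc m) (Suc i) = gauss_binomial w m i + w ^ Suc i * gauss_binomial w m (Suc i)"
proof (cases "i \<le> m")
  case True
  have "w ^ Suc i * w ^ (m - i) = w ^ Suc m"
    using True by (simp add: power_add[symmetric])
  moreover have "1 - w ^ Suc i \<noteq> 0"
    using assms by simp
  ultimately show ?thesis
    unfolding gauss_binomial_Suc_Suc gauss_binomial_Suc_right[of w m i]
    by (auto simp: field_simps)
next
  case False
  then show ?thesis by (simp add: gauss_binomial_eq_0)
qed

lemma alt_gauss_binomial_sum_add_2:
  assumes "\<And>j. 0 < j \<Longrightarrow> j \<le> m + 2 \<Longrightarrow> w ^ j \<noteq> 1"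
  shows "alt_gauss_binomial_sum w (m + 2) = (1 - w ^ Suc m) * alt_gauss_binomial_sum w m"
proof -
  let ?b = "gauss_binomial w"
  have pascal: "?b (Suc (Suc m)) (Suc i) = ?b (Suc m) i + w ^ Suc i * ?b (Suc m) (Suc i)"
    if "i \<le> Suc m" for i
    using that assms[of "Suc i"] by (intro gauss_binomial_pascal) auto
  have absorb: "(1 - w ^ Suc i) * ?b (Suc m) (Suc i) = (1 - w ^ Suc m) * ?b m i"
    if "i \<le> m" for i
  proof -
    have "1 - w ^ Suc i \<noteq> 0"
      using that assms[of "Suc i"] by auto
    then show ?thesis
      unfolding gauss_binomial_Suc_Suc by simp
  qed
  have "alt_gauss_binomial_sum w (m + 2)
      = 1 + (\<Sum>i\<le>Suc m. (-1) ^ Suc i * ?b (Suc (Suc m)) (Suc i))"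
    unfolding alt_gauss_binomial_sum_def by (simp add: sum.atMost_Suc_shift del: sum.atMost_Suc)
  also have "(\<Sum>i\<le>Suc m. (-1) ^ Suc i * ?b (Suc (Suc m)) (Suc i))
      = (\<Sum>i\<le>Suc m. (-1) ^ Suc i * ?b (Suc m) i)
        + (\<Sum>i\<le>Suc m. (-1) ^ Suc i * (w ^ Suc i * ?b (Suc m) (Suc i)))"
    by (simp add: pascal sum.distrib[symmetric] algebra_simps)
  also have "(\<Sum>i\<le>Suc m. (-1) ^ Suc i * ?b (Suc m) i)
      = -1 + (\<Sum>i\<le>m. (-1) ^ Suc (Suc i) * ?b (Suc m) (Suc i))"
    by (simp add: sum.atMost_Suc_shift del: sum.atMost_Suc)
  also have "(\<Sum>i\<le>Suc m. (-1) ^ Suc i * (w ^ Suc i * ?b (Suc m) (Suc i)))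
      = (\<Sum>i\<le>m. (-1) ^ Suc i * (w ^ Suc i * ?b (Suc m) (Suc i)))"
    by (simp add: gauss_binomial_eq_0)
  finally have "alt_gauss_binomial_sum w (m + 2)
      = (\<Sum>i\<le>m. (-1) ^ i * ((1 - w ^ Suc i) * ?b (Suc m) (Suc i)))"
    by (simp add: sum.distrib[symmetric] algebra_simps sum_subtractf[symmetric] sum_negf[symmetric])
  also have "\<dots> = (\<Sum>i\<le>m. (-1) ^ i * ((1 - w ^ Suc m) * ?b m i))"
    by (rule sum.cong[OF refl]) (simp only: absorb atMost_iff)
  also have "\<dots> = (1 - w ^ Suc m) * alt_gauss_binomial_sum w m"
    unfolding alt_gauss_binomial_sum_def by (simp add: sum_distrib_left algebra_simps)
  finally show ?thesis .
qed

lemma alt_gauss_binomial_sum_even: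
  assumes "\<And>j. 0 < j \<Longrightarrow> j \<le> 2 * n \<Longrightarrow> w ^ j \<noteq> 1"
  shows "alt_gauss_binomial_sum w (2 * n) = (\<Prod>j<n. 1 - w ^ (2 * j + 1))"
  using assms
proof (induction n)
  case 0
  then show ?case by (simp add: alt_gauss_binomial_sum_def)
next
  case (Suc n)
  have "alt_gauss_binomial_sum w (2 * Suc n) = (1 - w ^ Suc (2 * n)) * alt_gauss_binomial_sum w (2 * n)"
    using alt_gauss_binomial_sum_add_2[of "2 * n" w] Suc.prems by simp
  also have "alt_gauss_binomial_sum w (2 * n) = (\<Prod>j<n. 1 - w ^ (2 * j + 1))"
    using Suc by simp
  finally show ?case by (simp add: mult.commute)
qed


section \<open>Roots of unity of prime order\<close>

lemma one_minus_exp_i_real: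
  fixes x :: real
  shows "1 - exp (\<i> * of_real x) = of_real (2 * sin (x / 2)) * exp (\<i> * of_real (x / 2 - pi / 2))"
proof -
  define E where "E = exp (\<i> * of_real (x / 2))"
  define E' where "E' = exp (- (\<i> * of_real (x / 2)))"
  have "exp (\<i> * of_real (x / 2 - pi / 2)) = E * exp (\<i> * of_real (- (pi / 2)))"
    unfolding E_def by (simp add: exp_add[symmetric] algebra_simps)
  also have "exp (\<i> * of_real (- (pi / 2))) = - \<i>"
    by (simp only: exp_Euler cos_of_real sin_of_real) simp
  finally have rotate: "exp (\<i> * of_real (x / 2 - pi / 2)) = - \<i> * E"
    by simp
  have sin: "of_real (sin (x / 2)) = (E - E') / (2 * \<i>)"
    unfolding E_def E'_def sin_of_real[symmetric] by (rule sin_exp_eq)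
  have square: "exp (\<i> * of_real x) = E * E"
    unfolding E_def by (simp add: exp_add[symmetric])
  have "E' * E = 1"
    unfolding E_def E'_def by (simp add: exp_minus)
  then show ?thesis
    unfolding rotate square by (simp add: sin field_simps)
qed

locale odd_prime =
  fixes p :: nat
  assumes prime_p: "prime p" and odd_p: "odd p"
begin

lemma p_gt_1: "p > 1"
  using prime_p prime_gt_1_nat by blast

lemma p_pos: "p > 0"
  using p_gt_1 by simp

lemma not_dvd_2: "\<not> int p dvd 2"
proof
  assume "int p dvd 2"
  then have "int p \<le> 2" by (rule zdvd_imp_le) simp
  moreover have "p \<noteq> 2" using odd_p by auto
  ultimately show False using p_gt_1 by linarith
qed

lemma eta_pow_eq_exp: "eta_pow p t = exp (2 * pi * \<i> * of_int t / of_nat p)"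
proof -
  have nz: "(of_nat p :: complex) \<noteq> 0" using p_pos by simp
  have t: "of_int t = (of_int (t mod int p) + of_nat p * of_int (t div int p) :: complex)"
    by (metis mod_div_mult_eq of_int_add of_int_mult of_int_of_nat_eq add.commute mult.commute)
  have "2 * pi * \<i> * of_int t / of_nat p
      = 2 * pi * \<i> * of_int (t mod int p) / of_nat p + \<i> * (of_int (t div int p) * (of_real pi * 2))"
    using nz by (subst t) (simp add: field_simps)
  then show ?thesis
    by (simp add: eta_pow_def exp_add exp_2pi_1_int)
qed

lemma eta_pow_eq_exp_real: "eta_pow p t = exp (\<i> * of_real (2 * pi * of_int t / real p))"
  unfolding eta_pow_eq_exp by (rule arg_cong[where f=exp]) (simp add: field_simps)

lemma eta_pow_add: "eta_pow p (s + t) = eta_pow p s * eta_pow p t"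
  unfolding eta_pow_eq_exp by (simp add: exp_add[symmetric] add_divide_distrib distrib_left)

lemma eta_pow_0 [simp]: "eta_pow p 0 = 1"
  by (simp add: eta_pow_def)

lemma eta_pow_cong: "[s = t] (mod int p) \<Longrightarrow> eta_pow p s = eta_pow p t"
  by (simp add: eta_pow_def cong_def)

lemma eta_pow_minus_mult: "eta_pow p (- t) * eta_pow p t = 1"
  using eta_pow_add[of "- t" t] by simp

lemma eta_pow_power: "eta_pow p t ^ n = eta_pow p (t * int n)"
  by (induction n) (simp_all add: eta_pow_add distrib_left mult.commute)

lemma cnj_eta_pow: "cnj (eta_pow p t) = eta_pow p (- t)"
  by (simp add: eta_pow_eq_exp exp_cnj)

lemma eta_pow_eq_1_iff: "eta_pow p t = 1 \<longleftrightarrow> int p dvd t"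
proof -
  have "eta_pow p t = exp (2 * pi * \<i> * of_nat (nat (t mod int p)) / of_nat p)"
    using p_pos by (simp add: eta_pow_def)
  also have "\<dots> = 1 \<longleftrightarrow> p dvd nat (t mod int p)"
    using complex_root_unity_eq_1[of p "nat (t mod int p)"] p_pos by simp
  also have "\<dots> \<longleftrightarrow> t mod int p = 0"
  proof -
    have "0 \<le> t mod int p" "t mod int p < int p" using p_pos by auto
    then show ?thesis
      by (metis dvd_imp_le int_dvd_int_iff le_less nat_0_le nat_less_iff nat_neq_iff
          of_nat_0_less_iff p_pos dvd_0_right int_nat_eq not_less)
  qed
  finally show ?thesis by auto
qed

lemma sum_eta_pow_mult: "(\<Sum>n<p. eta_pow p (t * int n)) = (if int p dvd t then of_nat p else 0)"
proof (cases "int p dvd t")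
  case True
  then have "eta_pow p (t * int n) = 1" for n
    by (simp add: eta_pow_eq_1_iff)
  then show ?thesis using True by simp
next
  case False
  then have ne: "eta_pow p t \<noteq> 1" by (simp add: eta_pow_eq_1_iff)
  have "(\<Sum>n<p. eta_pow p (t * int n)) = (\<Sum>n<p. eta_pow p t ^ n)"
    by (simp add: eta_pow_power)
  also have "\<dots> = (eta_pow p t ^ p - 1) / (eta_pow p t - 1)"
    using ne geometric_sum by blast
  also have "eta_pow p t ^ p = 1"
    by (simp add: eta_pow_power eta_pow_eq_1_iff)
  finally show ?thesis using False by simp
qed

lemma sum_affine_reindex:
  fixes f :: "int \<Rightarrow> complex"
  assumes periodic: "\<And>t. f (t mod int p) = f t" and "coprime u (int p)"
  shows "(\<Sum>n<p. f (u * int n + v)) = (\<Sum>n<p. f (int n))"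
proof -
  define g where "g n = nat ((u * int n + v) mod int p)" for n
  have "g ` {..<p} \<subseteq> {..<p}"
    unfolding g_def using p_pos by (auto simp: nat_less_iff)
  moreover have inj: "inj_on g {..<p}"
  proof
    fix n n' assume "n \<in> {..<p}" "n' \<in> {..<p}" "g n = g n'"
    then have "[u * int n + v = u * int n' + v] (mod int p)"
      unfolding g_def using p_pos by (simp add: nat_eq_iff2 cong_def)
    then have "[int n = int n'] (mod int p)"
      using assms(2) cong_add_rcancel cong_mult_lcancel by blast
    then show "n = n'" using \<open>n \<in> _\<close> \<open>n' \<in> _\<close> by (simp add: cong_def)
  qed
  ultimately have "g ` {..<p} = {..<p}"
    using endo_inj_surj by blast
  then have "(\<Sum>n<p. f (int n)) = (\<Sum>n<p. f (int (g n)))"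
    using sum.reindex[OF inj, of "\<lambda>n. f (int n)"] by simp
  also have "\<dots> = (\<Sum>n<p. f (u * int n + v))"
    using p_pos by (intro sum.cong) (auto simp: g_def periodic)
  finally show ?thesis by simp
qed

end


section \<open>Quadratic Gauss sums\<close>

context odd_prime
begin

definition gauss_sum :: "int \<Rightarrow> complex" where
  "gauss_sum b = (\<Sum>n<p. eta_pow p (b * int n ^ 2))"

lemma eta_pow_square_mod:
  "eta_pow p (b * (t mod int p) ^ 2 + s) = eta_pow p (b * t ^ 2 + s)"
  by (intro eta_pow_cong cong_add cong_mult cong_pow cong_refl) (simp add: cong_def)

lemma gauss_sum_0: "gauss_sum 0 = of_nat p"
  by (simp add: gauss_sum_def)

lemma gauss_sum_cong: "[b = b'] (mod int p) \<Longrightarrow> gauss_sum b = gauss_sum b'"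
  unfolding gauss_sum_def by (intro sum.cong refl eta_pow_cong cong_mult cong_refl)

lemma gauss_sum_mult_square:
  assumes "coprime u (int p)"
  shows "gauss_sum (b * u ^ 2) = gauss_sum b"
proof -
  have "gauss_sum b = (\<Sum>n<p. eta_pow p (b * (u * int n + 0) ^ 2))"
    unfolding gauss_sum_def
    using sum_affine_reindex[of "\<lambda>t. eta_pow p (b * t ^ 2)" u 0] eta_pow_square_mod[of b _ 0] assms
    by simp
  then show ?thesis
    unfolding gauss_sum_def by (simp add: power_mult_distrib mult_ac)
qed

lemma sum_eta_pow_square_shift: "(\<Sum>n<p. eta_pow p (b * (int n + v) ^ 2)) = gauss_sum b"
  unfolding gauss_sum_def
  using sum_affine_reindex[of "\<lambda>t. eta_pow p (b * t ^ 2)" 1 v] eta_pow_square_mod[of b _ 0]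
  by simp

lemma gauss_sum_times_cnj:
  assumes "\<not> int p dvd b"
  shows "gauss_sum b * cnj (gauss_sum b) = of_nat p"
proof -
  have "gauss_sum b * cnj (gauss_sum b)
      = (\<Sum>n'<p. \<Sum>n<p. eta_pow p (b * int n ^ 2) * eta_pow p (- (b * int n' ^ 2)))"
    unfolding gauss_sum_def by (simp add: cnj_sum cnj_eta_pow sum_distrib_left sum_distrib_right)
  also have "\<dots> = (\<Sum>n'<p. \<Sum>n<p. eta_pow p (b * (int n + int n') ^ 2 - b * int n' ^ 2))"
  proof (rule sum.cong[OF refl])
    fix n'
    show "(\<Sum>n<p. eta_pow p (b * int n ^ 2) * eta_pow p (- (b * int n' ^ 2)))
        = (\<Sum>n<p. eta_pow p (b * (int n + int n') ^ 2 - b * int n' ^ 2))"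
      using sum_affine_reindex[of "\<lambda>t. eta_pow p (b * t ^ 2 - b * int n' ^ 2)" 1 "int n'"]
        eta_pow_square_mod[of b _ "- b * int n' ^ 2"]
      by (simp add: eta_pow_add[symmetric])
  qed
  also have "\<dots> = (\<Sum>n'<p. \<Sum>n<p. eta_pow p (b * int n ^ 2) * eta_pow p ((2 * b * int n) * int n'))"
    by (intro sum.cong refl, subst eta_pow_add[symmetric], rule arg_cong[where f="eta_pow p"])
      (simp add: power2_eq_square algebra_simps)
  also have "\<dots> = (\<Sum>n<p. eta_pow p (b * int n ^ 2) * (\<Sum>n'<p. eta_pow p ((2 * b * int n) * int n')))"
    unfolding sum_distrib_left by (rule sum.swap)
  also have "\<dots> = (\<Sum>n<p. if n = 0 then of_nat p else 0)"
  proof (intro sum.cong refl)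
    fix n assume n: "n \<in> {..<p}"
    have "int p dvd 2 * b * int n \<longleftrightarrow> n = 0"
    proof
      assume "int p dvd 2 * b * int n"
      then have "int p dvd int n"
        using assms not_dvd_2 prime_p by (simp add: prime_dvd_mult_iff)
      then show "n = 0" using n by (auto dest: dvd_imp_le)
    qed simp
    then show "eta_pow p (b * int n ^ 2) * (\<Sum>n'<p. eta_pow p (2 * b * int n * int n'))
        = (if n = 0 then of_nat p else 0)"
      by (simp add: sum_eta_pow_mult)
  qed
  also have "\<dots> = of_nat p" using p_pos by simp
  finally show ?thesis .
qed

lemma sum_gauss_sum: "(\<Sum>b<p. gauss_sum (int b)) = of_nat p"
proof -
  have "(\<Sum>b<p. gauss_sum (int b)) = (\<Sum>n<p. \<Sum>b<p. eta_pow p (int n ^ 2 * int b))"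
    unfolding gauss_sum_def by (subst sum.swap) (simp add: mult.commute)
  also have "\<dots> = (\<Sum>n<p. if n = 0 then of_nat p else 0)"
  proof (intro sum.cong refl)
    fix n assume n: "n \<in> {..<p}"
    have "int p dvd int n ^ 2 \<longleftrightarrow> n = 0"
    proof
      assume "int p dvd int n ^ 2"
      then have "int p dvd int n"
        using prime_p by (metis prime_dvd_power prime_nat_iff_prime int_dvd_int_iff of_nat_power)
      then show "n = 0" using n by (auto dest: dvd_imp_le)
    qed simp
    then show "(\<Sum>b<p. eta_pow p (int n ^ 2 * int b)) = (if n = 0 then of_nat p else 0)"
      by (simp add: sum_eta_pow_mult)
  qed
  also have "\<dots> = of_nat p" using p_pos by simp
  finally show ?thesis .
qed

end


section \<open>The sign of the Gauss sum for \<open>p \<equiv> 1 (mod 4)\<close>\<close>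

locale prime_1_mod_4 =
  fixes p k :: nat
  assumes prime_p: "prime p" and p_eq: "p = 4 * k + 1"
begin

sublocale odd_prime p
  using prime_p p_eq by unfold_locales simp_all

lemma k_pos: "k > 0"
  using p_eq prime_p by (cases k) auto

lemma k_eq: "(p - 1) div 4 = k" "(p - Suc 0) div 4 = k"
  using p_eq by simp_all

definition half :: int where "half = 2 * int k + 1"

lemma two_half: "2 * half = int p + 1"
  using p_eq by (simp add: half_def)

lemma int_p_eq: "int p = 2 * half - 1"
  using two_half by simp

lemma half_bounds: "0 < half" "half < int p"
  using p_eq k_pos by (simp_all add: half_def)

lemma not_dvd_half: "\<not> int p dvd half"
  using half_bounds by (auto dest: zdvd_imp_le)

lemma inv2_eq_half: "inv2 p = half"
  unfolding inv2_def
proof (rule the_equality)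
  show "0 \<le> half \<and> half < int p \<and> [2 * half = 1] (mod int p)"
    using half_bounds two_half by (simp add: cong_def)
next
  fix t assume t: "0 \<le> t \<and> t < int p \<and> [2 * t = 1] (mod int p)"
  then have "[2 * t = 2 * half] (mod int p)"
    using two_half by (simp add: cong_def)
  moreover have "coprime 2 (int p)"
    using prime_imp_coprime[of "int p" 2] prime_p not_dvd_2 by (simp add: coprime_commute)
  ultimately have "[t = half] (mod int p)"
    using cong_mult_lcancel by blast
  then show "t = half"
    using t half_bounds by (simp add: cong_def)
qed

lemma eta_pow_minus_1_power: "eta_pow p (-1) ^ j = eta_pow p (- int j)"
  by (simp add: eta_pow_power)

text \<open>In \<open>F_p\<close> the exponent \<open>half * (i\<^sup>2 + i)\<close> is the triangular number \<open>i (i + 1) / 2\<close>.\<close>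
lemma prod_minus_eta_pow:
  "(\<Prod>j<i. - eta_pow p (int j + 1)) = (-1) ^ i * eta_pow p (half * (int i ^ 2 + int i))"
proof (induction i)
  case (Suc i)
  have "half * (int (Suc i) ^ 2 + int (Suc i)) = half * (int i ^ 2 + int i) + (int i + 1) + int p * (int i + 1)"
    unfolding int_p_eq by (simp add: power2_eq_square algebra_simps)
  then have "[half * (int i ^ 2 + int i) + (int i + 1) = half * (int (Suc i) ^ 2 + int (Suc i))] (mod int p)"
    by (simp add: cong_def)
  then have "eta_pow p (half * (int i ^ 2 + int i)) * eta_pow p (int i + 1)
      = eta_pow p (half * (int (Suc i) ^ 2 + int (Suc i)))"
    by (simp add: eta_pow_add[symmetric] eta_pow_cong)
  then show ?case
    using Suc by (simp add: prod.lessThan_Suc algebra_simps)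
qed simp

lemma gauss_binomial_eta_pow:
  assumes "i \<le> p - 1"
  shows "gauss_binomial (eta_pow p (-1)) (p - 1) i = (-1) ^ i * eta_pow p (half * (int i ^ 2 + int i))"
proof -
  let ?w = "eta_pow p (-1)"
  have "gauss_binomial ?w (p - 1) i = (\<Prod>j<i. (1 - ?w ^ (p - 1 - j)) / (1 - ?w ^ Suc j))"
    unfolding gauss_binomial_def by (simp add: prod_dividef)
  also have "\<dots> = (\<Prod>j<i. - eta_pow p (int j + 1))"
  proof (rule prod.cong[OF refl])
    fix j assume j: "j \<in> {..<i}"
    have numerator: "?w ^ (p - 1 - j) = eta_pow p (int j + 1)"
      unfolding eta_pow_minus_1_power
      using j assms p_pos by (intro eta_pow_cong) (simp add: cong_def of_nat_diff mod_eq_dvd_iff)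
    have denominator: "?w ^ Suc j = eta_pow p (- (int j + 1))"
      using eta_pow_minus_1_power[of "Suc j"] by (simp add: algebra_simps)
    have "int j + 1 < int p"
      using j assms p_pos by auto
    then have "\<not> int p dvd int j + 1"
      by (auto dest: zdvd_imp_le)
    then have "eta_pow p (- (int j + 1)) \<noteq> 1"
      by (metis eta_pow_eq_1_iff dvd_minus_iff)
    then have "1 - eta_pow p (- (int j + 1)) \<noteq> 0"
      by simp
    moreover have "eta_pow p (int j + 1) * eta_pow p (- (int j + 1)) = 1"
      using eta_pow_minus_mult[of "int j + 1"] by (simp add: mult.commute)
    ultimately show "(1 - ?w ^ (p - 1 - j)) / (1 - ?w ^ Suc j) = - eta_pow p (int j + 1)"
      unfolding numerator denominator by (simp add: field_simps)
  qed
  also have "\<dots> = (-1) ^ i * eta_pow p (half * (int i ^ 2 + int i))"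
    by (rule prod_minus_eta_pow)
  finally show ?thesis .
qed

lemma alt_gauss_binomial_sum_eq_gauss_sum:
  "alt_gauss_binomial_sum (eta_pow p (-1)) (p - 1) = eta_pow p (- (half ^ 3)) * gauss_sum half"
proof -
  have "alt_gauss_binomial_sum (eta_pow p (-1)) (p - 1) = (\<Sum>i\<le>p-1. eta_pow p (half * (int i ^ 2 + int i)))"
    unfolding alt_gauss_binomial_sum_def
  proof (rule sum.cong[OF refl])
    fix i assume "i \<in> {..p-1}"
    then have "gauss_binomial (eta_pow p (-1)) (p - 1) i = (-1) ^ i * eta_pow p (half * (int i ^ 2 + int i))"
      by (intro gauss_binomial_eta_pow) auto
    moreover have "(-1::complex) ^ i * (-1) ^ i = 1"
      by (simp add: power_mult_distrib[symmetric])
    ultimately show "(-1) ^ i * gauss_binomial (eta_pow p (-1)) (p - 1) i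
        = eta_pow p (half * (int i ^ 2 + int i))"
      by (simp add: mult.assoc[symmetric])
  qed
  also have "\<dots> = (\<Sum>i<p. eta_pow p (half * (int i ^ 2 + int i)))"
    using p_pos by (intro sum.cong refl) auto
  also have "\<dots> = (\<Sum>i<p. eta_pow p (half * (int i + half) ^ 2) * eta_pow p (- (half ^ 3)))"
  proof (rule sum.cong[OF refl])
    fix i
    have "half * (int i + half) ^ 2 + - (half ^ 3) = half * (int i ^ 2 + int i) + int p * (half * int i)"
      unfolding int_p_eq by (simp add: power2_eq_square power3_eq_cube algebra_simps)
    then have "[half * (int i + half) ^ 2 + - (half ^ 3) = half * (int i ^ 2 + int i)] (mod int p)"
      by (simp add: cong_def)
    then show "eta_pow p (half * (int i ^ 2 + int i))
        = eta_pow p (half * (int i + half) ^ 2) * eta_pow p (- (half ^ 3))"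
      by (simp add: eta_pow_add[symmetric] eta_pow_cong)
  qed
  also have "\<dots> = eta_pow p (- (half ^ 3)) * gauss_sum half"
    unfolding sum_distrib_right[symmetric] sum_eta_pow_square_shift by (rule mult.commute)
  finally show ?thesis .
qed

lemma alt_gauss_binomial_sum_eq_prod:
  "alt_gauss_binomial_sum (eta_pow p (-1)) (p - 1) = (\<Prod>j<2*k. 1 - eta_pow p (- (2 * int j + 1)))"
proof -
  have "alt_gauss_binomial_sum (eta_pow p (-1)) (2 * (2 * k)) = (\<Prod>j<2*k. 1 - eta_pow p (-1) ^ (2 * j + 1))"
  proof (rule alt_gauss_binomial_sum_even)
    fix j :: nat assume "0 < j" "j \<le> 2 * (2 * k)"
    then have "\<not> int p dvd int j"
      using p_eq by (auto dest: zdvd_imp_le)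
    then show "eta_pow p (-1) ^ j \<noteq> 1"
      by (simp add: eta_pow_minus_1_power eta_pow_eq_1_iff)
  qed
  also have "\<dots> = (\<Prod>j<2*k. 1 - eta_pow p (- (2 * int j + 1)))"
    by (rule prod.cong[OF refl]) (simp only: eta_pow_minus_1_power, simp add: algebra_simps)
  moreover have "p - 1 = 2 * (2 * k)"
    using p_eq by simp
  ultimately show ?thesis
    by simp
qed

definition angle :: "nat \<Rightarrow> real" where
  "angle j = pi * (real p - 2 * real j - 1) / real p"

lemma one_minus_eta_pow_odd:
  "1 - eta_pow p (- (2 * int j + 1)) = of_real (2 * sin (angle j)) * exp (\<i> * of_real (angle j - pi / 2))"
proof -
  have "int p - 2 * int j - 1 = - (2 * int j + 1) + int p"
    by simp
  then have "[- (2 * int j + 1) = int p - 2 * int j - 1] (mod int p)"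
    by (simp only:) (simp add: cong_def)
  then have "eta_pow p (- (2 * int j + 1)) = eta_pow p (int p - 2 * int j - 1)"
    by (rule eta_pow_cong)
  also have "\<dots> = exp (\<i> * of_real (2 * angle j))"
    unfolding eta_pow_eq_exp_real angle_def by (simp add: mult_ac)
  finally have "eta_pow p (- (2 * int j + 1)) = exp (\<i> * of_real (2 * angle j))" .
  then show ?thesis
    using one_minus_exp_i_real[of "2 * angle j"] by simp
qed

definition sine_product :: real where
  "sine_product = (\<Prod>j<2*k. 2 * sin (angle j))"

lemma sine_product_pos: "sine_product > 0"
  unfolding sine_product_def
proof (rule prod_pos)
  fix j assume "j \<in> {..<2*k}"
  then have "0 < real p - 2 * real j - 1" "real p - 2 * real j - 1 < real p"
    using p_eq by auto
  then have "0 < angle j" "angle j < pi"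
    unfolding angle_def using p_pos by (simp_all add: divide_less_eq mult_less_cancel_left_pos)
  then show "0 < 2 * sin (angle j)"
    by (simp add: sin_gt_zero)
qed

lemma sum_angle: "(\<Sum>j<2*k. angle j - pi / 2) = pi * real k / real p"
proof -
  define t where "t j = real p - 2 * real j - 1" for j
  have "(\<Sum>j<n. t j) = real n * real p - real n ^ 2" for n
    by (induction n) (simp_all add: t_def power2_eq_square algebra_simps)
  moreover have "(\<Sum>j<2*k. angle j) = pi / real p * (\<Sum>j<2*k. t j)"
    unfolding sum_distrib_left by (simp add: angle_def t_def)
  ultimately have "(\<Sum>j<2*k. angle j - pi / 2) = pi / real p * (real (2 * k) * real p - real (2 * k) ^ 2) - real (2 * k) * (pi / 2)"
    by (simp add: sum_subtractf)
  also have "\<dots> = pi * real k / real p"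
    using p_eq by (simp add: field_simps power2_eq_square)
  finally show ?thesis .
qed

lemma prod_one_minus_eta_pow_odd:
  "(\<Prod>j<2*k. 1 - eta_pow p (- (2 * int j + 1))) = of_real sine_product * exp (\<i> * of_real (pi * real k / real p))"
proof -
  have "(\<Prod>j<2*k. 1 - eta_pow p (- (2 * int j + 1)))
      = (\<Prod>j<2*k. of_real (2 * sin (angle j)) * exp (\<i> * of_real (angle j - pi / 2)))"
    by (rule prod.cong[OF refl]) (rule one_minus_eta_pow_odd)
  also have "\<dots> = of_real sine_product * (\<Prod>j<2*k. exp (\<i> * of_real (angle j - pi / 2)))"
    by (simp add: prod.distrib sine_product_def of_real_prod)
  also have "(\<Prod>j<2*k. exp (\<i> * of_real (angle j - pi / 2))) = exp (\<i> * of_real (\<Sum>j<2*k. angle j - pi / 2))"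
    by (simp add: exp_sum[symmetric] sum_distrib_left of_real_sum)
  finally show ?thesis
    unfolding sum_angle .
qed

lemma eta_pow_half_cube_phase:
  "eta_pow p (half ^ 3) * exp (\<i> * of_real (pi * real k / real p)) = (-1) ^ k"
proof -
  define N where "N = 4 * k ^ 2 + 5 * k + 2"
  have "2 * (2 * real k + 1) ^ 3 + real k = real N * real p"
    using p_eq by (simp add: N_def power2_eq_square power3_eq_cube algebra_simps)
  moreover have "2 * pi * of_int (half ^ 3) / real p + pi * real k / real p
      = pi * (2 * (2 * real k + 1) ^ 3 + real k) / real p"
    by (simp add: half_def add_divide_distrib algebra_simps)
  ultimately have "2 * pi * of_int (half ^ 3) / real p + pi * real k / real p = real N * pi"
    using p_pos by simp
  then have "eta_pow p (half ^ 3) * exp (\<i> * of_real (pi * real k / real p)) = exp (of_nat N * (\<i> * of_real pi))"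
    unfolding eta_pow_eq_exp_real exp_add[symmetric] distrib_left[symmetric] of_real_add[symmetric]
    by (simp add: mult_ac)
  also have "\<dots> = (-1) ^ N"
    by (simp add: exp_of_nat_mult exp_pi_i')
  also have "N = k + 2 * (2 * k ^ 2 + 2 * k + 1)"
    by (simp add: N_def)
  finally show ?thesis
    by (simp add: power_add power_mult)
qed

text \<open>Gauss's evaluation: the product formula fixes the argument of \<open>gauss_sum half\<close> and
  \<open>gauss_sum_times_cnj\<close> its modulus.\<close>
lemma gauss_sum_half: "gauss_sum half = (-1) ^ k * of_real (sqrt (real p))"
proof -
  have "eta_pow p (- (half ^ 3)) * gauss_sum half = of_real sine_product * exp (\<i> * of_real (pi * real k / real p))"
    using alt_gauss_binomial_sum_eq_gauss_sum alt_gauss_binomial_sum_eq_prod prod_one_minus_eta_pow_odd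
    by simp
  then have "gauss_sum half = of_real sine_product * (eta_pow p (half ^ 3) * exp (\<i> * of_real (pi * real k / real p)))"
    using eta_pow_minus_mult[of "half ^ 3"] by (metis mult.assoc mult.commute mult_1)
  then have signed: "gauss_sum half = (-1) ^ k * of_real sine_product"
    unfolding eta_pow_half_cube_phase by (simp add: mult.commute)
  have "of_real (sine_product * sine_product) = (of_nat p :: complex)"
    using gauss_sum_times_cnj[OF not_dvd_half]
    unfolding signed by (simp add: power_mult_distrib[symmetric] mult_ac)
  then have "sine_product * sine_product = real p"
    by (metis of_real_eq_iff of_real_of_nat_eq)
  then have "sine_product = sqrt (real p)"
    using sine_product_pos by (metis abs_of_pos real_sqrt_abs2)
  then show ?thesis
    unfolding signed by simp
qed

end


section \<open>Eigenvectors of the discrete Fourier transform\<close>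

lemma DFT_mult_left: "DFT p (\<lambda>n. w * f n) m = w * DFT p f m"
  by (simp add: DFT_def sum_distrib_left mult_ac)

lemma DFT_sum: "DFT p (\<lambda>n. \<Sum>j\<in>J. f j n) m = (\<Sum>j\<in>J. DFT p (f j) m)"
  by (simp add: DFT_def sum_distrib_left sum_distrib_right sum.swap[of _ J] mult_ac)

lemma theta_power: "theta p ^ n = exp (of_nat n * (2 * pi * \<i> / of_nat (p - 1)))"
  unfolding theta_def by (rule exp_of_nat_mult[symmetric])

text \<open>For \<open>p \<le> 1\<close> this holds as well, since then \<open>theta p = exp 0 = 1\<close>.\<close>
lemma theta_power_mod: "theta p ^ n = theta p ^ (n mod (p - 1))"
proof -
  have period: "theta p ^ (p - 1) = 1"
    by (cases "p - 1 = 0") (simp_all add: theta_power)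
  have "theta p ^ n = theta p ^ ((p - 1) * (n div (p - 1)) + n mod (p - 1))"
    by simp
  also have "\<dots> = theta p ^ (n mod (p - 1))"
    by (simp only: power_add power_mult period) simp
  finally show ?thesis .
qed

lemma sum_lessThan_double_mod_2:
  "(\<Sum>e<2 * N. f (e mod 2)) = of_nat N * (f 0 + f (1::nat) :: 'a::comm_semiring_1)"
proof (induction N)
  case (Suc N)
  have "2 * Suc N = Suc (Suc (2 * N))" "Suc (2 * N) mod 2 = 1" "(2 * N) mod 2 = 0"
    by presburger+
  then show ?case
    using Suc by (simp add: algebra_simps)
qed simp

locale prime_1_mod_4_primroot = prime_1_mod_4 +
  fixes a :: nat
  assumes primroot: "residue_primroot p a"
begin

lemma ord_a: "ord p a = p - 1"
  using primroot prime_p by (simp add: residue_primroot_def totient_prime)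

lemma coprime_p_a: "coprime p a"
  using primroot by (simp add: residue_primroot_def)

lemma a_pos: "a > 0"
  using coprime_p_a p_gt_1 by (cases a) auto

lemma bij_betw_primroot_power: "bij_betw (\<lambda>i. a ^ i mod p) {..<p-1} {0<..<p}"
  using residue_primroot_is_generator[OF p_gt_1 primroot] prime_p
  by (simp add: totient_prime totatives_prime)

lemma primroot_power_surj:
  assumes "j \<in> {0<..<p}" obtains i where "i < p - 1" "[a ^ i = j] (mod p)"
  using assms bij_betw_primroot_power unfolding bij_betw_def cong_def
  by (metis (no_types, lifting) greaterThanLessThan_iff image_iff lessThan_iff mod_less)

lemma gauss_sum_primroot_power_mod_2: "gauss_sum (int a ^ e) = gauss_sum (int a ^ (e mod 2))"
proof (induction e rule: less_induct)
  case (less e)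
  show ?case
  proof (cases "e < 2")
    case False
    then obtain e' where e: "e = e' + 2"
      by (metis add.commute le_add_diff_inverse not_less)
    have "gauss_sum (int a ^ e) = gauss_sum (int a ^ e' * int a ^ 2)"
      unfolding e power_add ..
    also have "\<dots> = gauss_sum (int a ^ e')"
      using coprime_p_a by (intro gauss_sum_mult_square) (simp add: coprime_commute)
    finally show ?thesis
      using less[of e'] e by simp
  qed simp
qed

text \<open>The sums \<open>gauss_sum b\<close> over all \<open>b\<close> add up to \<open>gauss_sum 0\<close>, so those over the
  nonzero \<open>b = a ^ e\<close> cancel; by the previous lemma they take only two values.\<close>
lemma gauss_sum_primroot: "gauss_sum (int a) = - gauss_sum 1"
proof -
  have "(\<Sum>e<p-1. gauss_sum (int a ^ e)) = (\<Sum>i<p-1. gauss_sum (int (a ^ i mod p)))"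
    by (intro sum.cong refl gauss_sum_cong) (simp add: cong_def zmod_int)
  also have "\<dots> = (\<Sum>b\<in>{0<..<p}. gauss_sum (int b))"
    using sum.reindex_bij_betw[OF bij_betw_primroot_power, of "\<lambda>b. gauss_sum (int b)"] by simp
  also have "\<dots> = (\<Sum>b<p. gauss_sum (int b)) - gauss_sum 0"
  proof -
    have "{..<p} = insert 0 {0<..<p}" using p_pos by auto
    then show ?thesis by simp
  qed
  finally have "(\<Sum>e<p-1. gauss_sum (int a ^ e)) = 0"
    by (simp add: sum_gauss_sum gauss_sum_0)
  moreover have "(\<Sum>e<p-1. gauss_sum (int a ^ e)) = of_nat (2 * k) * (gauss_sum 1 + gauss_sum (int a))"
  proof -
    have "p - 1 = 2 * (2 * k)"
      using p_eq by simp
    then have "(\<Sum>e<p-1. gauss_sum (int a ^ e)) = (\<Sum>e<2 * (2 * k). gauss_sum (int a ^ (e mod 2)))"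
      using gauss_sum_primroot_power_mod_2 by simp
    then show ?thesis
      using sum_lessThan_double_mod_2[of "\<lambda>e. gauss_sum (int a ^ e)" "2 * k"] by simp
  qed
  ultimately show ?thesis
    using k_pos by (simp add: add_eq_0_iff)
qed

lemma gauss_sum_mult_primroot_power:
  assumes "\<not> int p dvd b"
  shows "gauss_sum (b * int a ^ e) = (-1) ^ e * gauss_sum b"
proof -
  have power: "gauss_sum (int a ^ e) = (-1) ^ e * gauss_sum 1" for e
    by (subst gauss_sum_primroot_power_mod_2)
      (auto simp: gauss_sum_primroot minus_one_power_iff elim: oddE)
  have b_mod: "b mod int p \<noteq> 0" "0 \<le> b mod int p" "b mod int p < int p"
    using assms p_pos by auto
  then have "nat (b mod int p) \<in> {0<..<p}"
    by auto
  then obtain i where "[a ^ i = nat (b mod int p)] (mod p)"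
    by (rule primroot_power_surj)
  then have "[int (a ^ i) = int (nat (b mod int p))] (mod int p)"
    by (simp only: cong_int_iff)
  then have "[int a ^ i = b mod int p] (mod int p)"
    using b_mod by simp
  then have b: "[b = int a ^ i] (mod int p)"
    by (simp add: cong_def)
  have "gauss_sum (b * int a ^ e) = gauss_sum (int a ^ (i + e))"
    using b by (intro gauss_sum_cong) (simp add: power_add cong_mult cong_refl)
  moreover have "gauss_sum b = gauss_sum (int a ^ i)"
    using b by (rule gauss_sum_cong)
  ultimately show ?thesis
    using power[of "i + e"] power[of i] by (simp add: power_add)
qed

definition root_minus_1 :: int where "root_minus_1 = int a ^ k"

lemma root_minus_1_square: "[root_minus_1 * root_minus_1 = - 1] (mod int p)"
proof -
  define y where "y = int a ^ (2 * k)"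
  have "[a ^ (p - 1) = 1] (mod p)"
    using ord[of a p] ord_a by simp
  then have "[y * y = 1] (mod int p)"
    using p_eq cong_int_iff[of "a ^ (p - 1)" 1 p] by (simp add: y_def power_add[symmetric])
  then have "[y = 1] (mod int p) \<or> [y = - 1] (mod int p)"
    using prime_p a_pos by (intro cong_square) (simp_all add: y_def)
  moreover have "\<not> [y = 1] (mod int p)"
  proof
    assume "[y = 1] (mod int p)"
    then have "[a ^ (2 * k) = 1] (mod p)"
      using cong_int_iff[of "a ^ (2 * k)" 1 p] by (simp add: y_def)
    moreover have "\<not> [a ^ (2 * k) = 1] (mod p)"
      using ord_a p_eq k_pos by (intro ord_minimal) auto
    ultimately show False by simp
  qed
  ultimately show ?thesis
    by (simp add: y_def root_minus_1_def power_add[symmetric] mult_2)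
qed

lemma dvd_root_minus_1_square: "int p dvd root_minus_1 * root_minus_1 + 1"
  using root_minus_1_square by (simp add: cong_iff_dvd_diff)

lemma coprime_root_minus_1: "coprime (- root_minus_1) (int p)"
proof -
  have "\<not> int p dvd root_minus_1"
  proof
    assume "int p dvd root_minus_1"
    then have "int p dvd 1"
      using dvd_root_minus_1_square by (simp add: dvd_add_right_iff)
    then show False
      using p_gt_1 by simp
  qed
  then show ?thesis
    using prime_imp_coprime[of "int p" root_minus_1] prime_p by (simp add: coprime_commute)
qed

lemma primroot_power_3k: "[int a ^ (3 * k) = - root_minus_1] (mod int p)"
proof -
  have "int a ^ (3 * k) = int a ^ (k + k + k)"
    by (rule arg_cong[where f="\<lambda>n. int a ^ n"]) simp
  also have "\<dots> = (root_minus_1 * root_minus_1) * root_minus_1"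
    unfolding root_minus_1_def by (simp only: power_add)
  finally have "int a ^ (3 * k) = (root_minus_1 * root_minus_1) * root_minus_1" .
  moreover have "[(root_minus_1 * root_minus_1) * root_minus_1 = (- 1) * root_minus_1] (mod int p)"
    using root_minus_1_square by (intro cong_mult cong_refl)
  ultimately show ?thesis
    by simp
qed

lemma gauss_sum_half_root_minus_1: "gauss_sum (half * root_minus_1) = of_real (sqrt (real p))"
proof -
  have "gauss_sum (half * root_minus_1) = (-1) ^ k * gauss_sum half"
    unfolding root_minus_1_def using not_dvd_half by (rule gauss_sum_mult_primroot_power)
  then show ?thesis
    by (simp add: gauss_sum_half power_mult_distrib[symmetric])
qed

text \<open>Congruences modulo \<open>p\<close> are verified below by exhibiting \<open>A - B\<close> in the ideal
  generated by \<open>p = 2 half - 1\<close> and \<open>root_minus_1\<^sup>2 + 1\<close>; the cofactors \<open>U\<close> and \<open>V\<close>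
  are obtained by polynomial division.\<close>
lemma cong_by_relations:
  assumes "A - B = (2 * half - 1) * U + (root_minus_1 * root_minus_1 + 1) * V"
  shows "[A = B] (mod int p)"
  using assms dvd_root_minus_1_square two_half by (simp add: cong_iff_dvd_diff)

lemma theta_power_3k: "theta p ^ (3 * k) = - \<i>"
proof -
  have "theta p ^ (3 * k) = exp (\<i> * of_real pi + \<i> * of_real (pi / 2))"
    unfolding theta_power using p_eq k_pos by (intro arg_cong[where f=exp]) (simp add: field_simps)
  also have "\<dots> = - \<i>"
    by (simp only: exp_add exp_pi_i' exp_Euler cos_of_real sin_of_real cos_pi_half sin_pi_half) simp
  finally show ?thesis .
qed

lemma dlog_unique:
  assumes "j \<in> {1..p-1}" shows "\<exists>!m. m \<le> p - 2 \<and> [a ^ m = j] (mod p)"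
proof -
  have "j \<in> {0<..<p}"
    using assms p_pos by auto
  then obtain i where i: "i < p - 1" "[a ^ i = j] (mod p)"
    by (rule primroot_power_surj)
  show ?thesis
  proof (rule ex1I[of _ i])
    fix m assume m: "m \<le> p - 2 \<and> [a ^ m = j] (mod p)"
    then have "[a ^ m = a ^ i] (mod p)"
      using i by (metis cong_sym cong_trans)
    then have "[m = i] (mod (p - 1))"
      using order_divides_expdiff[OF coprime_p_a] ord_a by simp
    moreover have "m < p - 1"
      using m p_eq k_pos by linarith
    ultimately show "m = i"
      using i by (simp add: cong_def)
  qed (use i in simp)
qed

lemma primroot_power_dlog: "j \<in> {1..p-1} \<Longrightarrow> [a ^ dlog p a j = j] (mod p)"
  using theI'[OF dlog_unique] unfolding dlog_def by simp

definition character :: "nat \<Rightarrow> nat \<Rightarrow> complex" where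
  "character x j = theta p ^ (x * dlog p a j)"

lemma character_eq:
  assumes "j \<in> {1..p-1}" "[a ^ e = j] (mod p)"
  shows "character x j = theta p ^ (x * e)"
proof -
  have "[a ^ dlog p a j = a ^ e] (mod p)"
    using primroot_power_dlog[OF assms(1)] assms(2) by (metis cong_sym cong_trans)
  then have "[dlog p a j = e] (mod (p - 1))"
    using order_divides_expdiff[OF coprime_p_a] ord_a by simp
  then have "[x * dlog p a j = x * e] (mod (p - 1))"
    by (intro cong_mult cong_refl)
  then show ?thesis
    unfolding character_def by (metis theta_power_mod cong_def)
qed

definition twist :: "nat \<Rightarrow> nat" where
  "twist j = nat ((- root_minus_1 * int j) mod int p)"

lemma cong_twist: "[int (twist j) = - root_minus_1 * int j] (mod int p)"
  using p_pos by (simp add: twist_def cong_def)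

lemma bij_betw_twist: "bij_betw twist {1..p-1} {1..p-1}"
proof -
  have "twist ` {1..p-1} \<subseteq> {1..p-1}"
  proof
    fix y assume "y \<in> twist ` {1..p-1}"
    then obtain j where j: "j \<in> {1..p-1}" "y = twist j" by auto
    have "\<not> int p dvd int j"
      using j p_pos by (auto dest: dvd_imp_le)
    then have "\<not> int p dvd (- root_minus_1 * int j)"
      using coprime_root_minus_1 coprime_dvd_mult_right_iff coprime_commute by blast
    then have "(- root_minus_1 * int j) mod int p \<noteq> 0"
      "0 \<le> (- root_minus_1 * int j) mod int p" "(- root_minus_1 * int j) mod int p < int p"
      using p_pos by auto
    then show "y \<in> {1..p-1}"
      unfolding j(2) twist_def by auto
  qed
  moreover have inj: "inj_on twist {1..p-1}"
  proof
    fix j j' assume j: "j \<in> {1..p-1}" "j' \<in> {1..p-1}" "twist j = twist j'"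
    then have "[- root_minus_1 * int j = - root_minus_1 * int j'] (mod int p)"
      using cong_twist[of j] cong_twist[of j'] by (metis cong_sym cong_trans)
    then have "[int j = int j'] (mod int p)"
      using coprime_root_minus_1 cong_mult_lcancel by blast
    moreover have "j < p" "j' < p"
      using j p_pos by auto
    ultimately show "j = j'"
      by (simp add: cong_def)
  qed
  ultimately show ?thesis
    using endo_inj_surj[of "{1..p-1}" twist] by (simp add: bij_betw_def)
qed

text \<open>The twist is multiplication by \<open>- root_minus_1 = a ^ (3 k)\<close>, on which the character
  takes the value \<open>theta ^ (3 k x) = (- \<i>) ^ x\<close>.\<close>
lemma character_twist:
  assumes "j \<in> {1..p-1}"
  shows "character x (twist j) = (- \<i>) ^ x * character x j"
proof -
  have "twist j \<in> {1..p-1}"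
    using bij_betw_twist assms unfolding bij_betw_def by auto
  moreover have "[a ^ (3 * k + dlog p a j) = twist j] (mod p)"
  proof -
    have "[int a ^ dlog p a j = int j] (mod int p)"
      using primroot_power_dlog[OF assms] by (simp add: cong_int_iff[symmetric])
    then have "[int a ^ (3 * k) * int a ^ dlog p a j = - root_minus_1 * int j] (mod int p)"
      using primroot_power_3k by (intro cong_mult)
    then have "[int a ^ (3 * k + dlog p a j) = int (twist j)] (mod int p)"
      using cong_twist[of j] by (simp add: power_add) (metis cong_sym cong_trans)
    then show ?thesis
      by (simp add: cong_int_iff[symmetric])
  qed
  ultimately have "character x (twist j) = theta p ^ (x * (3 * k + dlog p a j))"
    by (rule character_eq)
  also have "\<dots> = (theta p ^ (3 * k)) ^ x * character x j"
    by (simp add: character_def algebra_simps power_add power_mult[symmetric])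
  finally show ?thesis
    by (simp add: theta_power_3k)
qed

definition chirp :: "int \<Rightarrow> nat \<Rightarrow> complex" where
  "chirp j n = eta_pow p (root_minus_1 * (j - int n) ^ 2 - half * root_minus_1 * int n ^ 2)"

lemma chirp_cong: "[j = j'] (mod int p) \<Longrightarrow> chirp j = chirp j'"
  unfolding chirp_def by (intro ext eta_pow_cong cong_diff cong_mult cong_pow cong_refl)

text \<open>Completing the square turns the transform of a chirp into a Gauss sum times a chirp.\<close>
lemma DFT_chirp: "DFT p (chirp (- (root_minus_1 * j))) m = chirp j m"
proof -
  let ?c = root_minus_1
  have "eta_pow p (int m * int n) * chirp (- (?c * j)) n
      = eta_pow p (half * ?c * (int n + ?c * (2 * j - int m)) ^ 2) * chirp j m" for n
  proof -
    have "[int m * int n + (?c * (- ?c * j - int n) ^ 2 - half * ?c * int n ^ 2)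
        = half * ?c * (int n + ?c * (2 * j - int m)) ^ 2 + (?c * (j - int m) ^ 2 - half * ?c * int m ^ 2)] (mod int p)"
      by (rule cong_by_relations[where
            U = "2 * int n * j - int m * int n + 2 * ?c * j ^ 2 - ?c * int n ^ 2 - 2 * ?c * int m * j + ?c * int m ^ 2" and
            V = "2 * int n * j - 4 * half * int n * j + 2 * half * int m * int n + ?c * j ^ 2 - 4 * ?c * half * j ^ 2
                 + 4 * ?c * half * int m * j - ?c * half * int m ^ 2"])
        (simp add: algebra_simps power2_eq_square)
    then show ?thesis
      unfolding chirp_def by (simp add: eta_pow_add[symmetric] eta_pow_cong)
  qed
  then have "DFT p (chirp (- (?c * j))) m = 1 / sqrt (real p) * gauss_sum (half * ?c) * chirp j m"
    by (simp add: DFT_def sum_distrib_right[symmetric] sum_eta_pow_square_shift)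
  also have "\<dots> = chirp j m"
    using p_pos by (simp add: gauss_sum_half_root_minus_1)
  finally show ?thesis .
qed

lemma phi_0_eq_chirp: "phi p a 0 = (\<lambda>n. 1 / sqrt (real p) * chirp 0 n)"
proof
  fix n
  have "[half * root_minus_1 * int n ^ 2 = root_minus_1 * (0 - int n) ^ 2 - half * root_minus_1 * int n ^ 2] (mod int p)"
    by (rule cong_by_relations[where U = "root_minus_1 * int n ^ 2" and V = 0]) (simp add: algebra_simps)
  then have "eta_pow p (half * root_minus_1 * int n ^ 2) = chirp 0 n"
    unfolding chirp_def by (rule eta_pow_cong)
  then show "phi p a 0 n = 1 / sqrt (real p) * chirp 0 n"
    by (simp add: phi_def Let_def k_eq inv2_eq_half root_minus_1_def)
qed

lemma phi_eq_chirp_sum: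
  assumes "x \<noteq> 0"
  shows "phi p a x = (\<lambda>n. 1 / sqrt (real p * real (p - 1)) * (\<Sum>j\<in>{1..p-1}. character x j * chirp (int j) n))"
  using assms by (intro ext) (simp add: phi_def Let_def k_eq chirp_def character_def inv2_eq_half root_minus_1_def)

lemma DFT_phi: "DFT p (phi p a x) m = (- \<i>) ^ x * phi p a x m"
proof (cases "x = 0")
  case True
  then show ?thesis
    using DFT_chirp[of 0] unfolding True phi_0_eq_chirp DFT_mult_left by simp
next
  case False
  define C where "C = complex_of_real (1 / sqrt (real p * real (p - 1)))"
  have "DFT p (phi p a x) m = C * (\<Sum>j\<in>{1..p-1}. character x j * DFT p (chirp (int j)) m)"
    unfolding C_def phi_eq_chirp_sum[OF False] DFT_mult_left DFT_sum ..
  also have "\<dots> = C * (\<Sum>j\<in>{1..p-1}. character x (twist j) * DFT p (chirp (int (twist j))) m)"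
    using sum.reindex_bij_betw[OF bij_betw_twist, of "\<lambda>j. character x j * DFT p (chirp (int j)) m"]
    by simp
  also have "\<dots> = C * (\<Sum>j\<in>{1..p-1}. (- \<i>) ^ x * (character x j * chirp (int j) m))"
    using chirp_cong[OF cong_twist] by (intro arg_cong[where f="(*) C"] sum.cong refl)
      (simp add: character_twist DFT_chirp)
  also have "\<dots> = (- \<i>) ^ x * phi p a x m"
    unfolding phi_eq_chirp_sum[OF False] C_def by (simp add: sum_distrib_left mult_ac)
  finally show ?thesis .
qed

end

theorem theorem4:
  fixes p a x :: nat
  assumes "prime p" and "[p = 1] (mod 4)"
    and "residue_primroot p a"
    and "x < p"
  shows "\<forall>m<p. DFT p (phi p a x) m = (- \<i>) ^ x * phi p a x m"
proof -
  have "p mod 4 = 1"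
    using assms(2) by (simp add: cong_def)
  then have "p = 4 * (p div 4) + 1"
    by presburger
  then interpret prime_1_mod_4_primroot p "p div 4" a
    using assms(1,3) by unfold_locales auto
  show ?thesis
    using DFT_phi by blast
qed

end
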